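(* Let $F$ be a cusp form of even weight $k$ for $\mathbf G(\mathbb Z)$ and $\chi$ a primitive Dirichlet character mod $N$. Then for every $Y\in R_3^+(\mathbb R)$, $$F_\chi\big(\sqrt{-1}\,(N^2Y)^{-1}\big)=(-1)^{3k/2}\,W(\chi)^2N^{3k-1}(\det Y)^k\,F_{\bar\chi}(\sqrt{-1}\,Y),$$ where $(N^2Y)^{-1}$ is the Jordan-algebra inverse.
   Context: $\mathfrak J_\mathbb Q$ is the exceptional Jordan algebra of $3\times3$ Hermitian matrices over the Cayley numbers $\mathfrak C_\mathbb Q$ (entries $a,b,c\in\mathbb Q$ on the diagonal, $x,y,z\in\mathfrak C_\mathbb Q$ off-diagonal), with its cubic determinant $\det$ and trace $\mathrm{Tr}$; $\mathfrak J(\mathbb Z)$ is the lattice with integral diagonal and off-diagonal entries in the integral Cayley numbers $\mathfrak o$. $(X,Y)=\mathrm{Tr}(X\circ Y)$ with $X\circ Y=\frac12(XY+YX)$. $R_3^+(\mathbb R)=\{X^2:X\in\mathfrak J(\mathbb R),\det X\ne0\}$, $\mathfrak J(\mathbb Z)_{>0}=\mathfrak J(\mathbb Z)\cap R_3^+(\mathbb R)$. $F$ is a holomorphic cusp form of weight $k$ on the exceptional tube domain $\{X+\sqrt{-1}Y:X,Y\in\mathfrak J(\mathbb R),Y\in R_3^+(\mathbb R)\}$ for $\mathbf G(\mathbb Z)$, $\mathbf G$ the $\mathbb Q$-group of type $GE_{7,3}$, with Fourier expansion $F(Z)=\sum_{T\in\mathfrak J(\mathbb Z)_{>0}}a_F(T)\mathbf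 e((T,Z))$, $\mathbf e(x)=e^{2\pi\sqrt{-1}x}$. For a Dirichlet character $\chi$ mod $N$ (extended by $0$ on non-units), $F_\chi(Z)=\sum_{T}\chi(\mathrm{Tr}(T))a_F(T)\mathbf e((T,Z))$, and $W(\chi)=\sum_{a\bmod N}\chi(a)\mathbf e(a/N)$. *)

theory Defs
  imports "HOL-Analysis.Analysis"
begin

section \<open>Cayley numbers (octonions) over a commutative ring\<close>

text \<open>Basis e0 = 1, e1, ..., e7; multiplication by the Cayley-Dickson doubling of the
  quaternions: (a,b)(c,d) = (ac - conj(d) b, d a + b conj(c)), e0..e3 = quaternion
  part a, e4..e7 = part b.\<close>

datatype 'a oct = Oct 'a 'a 'a 'a 'a 'a 'a 'a

fun ocomp :: "'a oct \<Rightarrow> nat \<Rightarrow> 'a" where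
  "ocomp (Oct x0 x1 x2 x3 x4 x5 x6 x7) i =
     [x0, x1, x2, x3, x4, x5, x6, x7] ! i"

fun oct_map :: "('a \<Rightarrow> 'b) \<Rightarrow> 'a oct \<Rightarrow> 'b oct" where
  "oct_map f (Oct x0 x1 x2 x3 x4 x5 x6 x7) =
     Oct (f x0) (f x1) (f x2) (f x3) (f x4) (f x5) (f x6) (f x7)"

fun oct_add :: "'a::plus oct \<Rightarrow> 'a oct \<Rightarrow> 'a oct" where
  "oct_add (Oct x0 x1 x2 x3 x4 x5 x6 x7) (Oct y0 y1 y2 y3 y4 y5 y6 y7) =
     Oct (x0 + y0) (x1 + y1) (x2 + y2) (x3 + y3) (x4 + y4) (x5 + y5) (x6 + y6) (x7 + y7)"

definition oct_smul :: "'a::times \<Rightarrow> 'a oct \<Rightarrow> 'a oct" where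
  "oct_smul c x = oct_map (\<lambda>t. c * t) x"

definition oct_scalar :: "'a::zero \<Rightarrow> 'a oct" where
  "oct_scalar c = Oct c 0 0 0 0 0 0 0"

fun oct_cnj :: "'a::uminus oct \<Rightarrow> 'a oct" where
  "oct_cnj (Oct x0 x1 x2 x3 x4 x5 x6 x7) =
     Oct x0 (- x1) (- x2) (- x3) (- x4) (- x5) (- x6) (- x7)"

fun oct_mul :: "'a::comm_ring_1 oct \<Rightarrow> 'a oct \<Rightarrow> 'a oct" where
  "oct_mul (Oct x0 x1 x2 x3 x4 x5 x6 x7) (Oct y0 y1 y2 y3 y4 y5 y6 y7) =
     Oct (x0 * y0 - x1 * y1 - x2 * y2 - x3 * y3 - x4 * y4 - x5 * y5 - x6 * y6 - x7 * y7)
     (x0 * y1 + x1 * y0 + x2 * y3 - x3 * y2 + x4 * y5 - x5 * y4 - x6 * y7 + x7 * y6)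
     (x0 * y2 - x1 * y3 + x2 * y0 + x3 * y1 + x4 * y6 + x5 * y7 - x6 * y4 - x7 * y5)
     (x0 * y3 + x1 * y2 - x2 * y1 + x3 * y0 + x4 * y7 - x5 * y6 + x6 * y5 - x7 * y4)
     (x0 * y4 - x1 * y5 - x2 * y6 - x3 * y7 + x4 * y0 + x5 * y1 + x6 * y2 + x7 * y3)
     (x0 * y5 + x1 * y4 - x2 * y7 + x3 * y6 - x4 * y1 + x5 * y0 - x6 * y3 + x7 * y2)
     (x0 * y6 + x1 * y7 + x2 * y4 - x3 * y5 - x4 * y2 + x5 * y3 + x6 * y0 - x7 * y1)
     (x0 * y7 - x1 * y6 + x2 * y5 + x3 * y4 - x4 * y3 - x5 * y2 + x6 * y1 + x7 * y0)"

definition oct_re :: "'a oct \<Rightarrow> 'a" where "oct_re x = ocomp x 0"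
definition oct_tr :: "'a::comm_ring_1 oct \<Rightarrow> 'a" where "oct_tr x = 2 * oct_re x"
definition oct_norm :: "'a::comm_ring_1 oct \<Rightarrow> 'a" where
  "oct_norm x = oct_re (oct_mul x (oct_cnj x))"

text \<open>The integral Cayley numbers: Z^8 together with the half-integral vectors whose set of
  half-odd coordinates is a word of the following extended Hamming code.  This lattice is
  closed under multiplication, contains 1 and is unimodular for the trace form, hence it is
  a maximal order (Coxeter's integral octonions for this multiplication table); all maximal
  orders are conjugate under automorphisms of the Cayley algebra.\<close>

definition oint_code :: "nat set set" where
  "oint_code = {{}, {0,1,2,3,4,5,6,7},
     {0,1,2,3}, {0,1,4,6}, {0,1,5,7}, {0,2,4,5}, {0,2,6,7}, {0,3,4,7}, {0,3,5,6},
     {1,2,4,7}, {1,2,5,6}, {1,3,4,5}, {1,3,6,7}, {2,3,4,6}, {2,3,5,7}, {4,5,6,7}}"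

definition half_odd :: "real \<Rightarrow> bool" where
  "half_odd t \<longleftrightarrow> (\<exists>n::int. 2 * t = 2 * of_int n + 1)"

definition oint :: "real oct set" where
  "oint = {x. (\<forall>i<8. 2 * ocomp x i \<in> \<int>) \<and> {i. i < 8 \<and> half_odd (ocomp x i)} \<in> oint_code}"

section \<open>The exceptional Jordan algebra\<close>

text \<open>Jor a b c x y z is the Hermitian matrix
  [[a, z, conj y], [conj z, b, x], [y, conj x, c]].\<close>

datatype 'a jor = Jor 'a 'a 'a "'a oct" "'a oct" "'a oct"

fun jor_map :: "('a \<Rightarrow> 'b) \<Rightarrow> 'a jor \<Rightarrow> 'b jor" where
  "jor_map f (Jor a b c x y z) = Jor (f a) (f b) (f c) (oct_map f x) (oct_map f y) (oct_map f z)"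

fun jor_add :: "'a::plus jor \<Rightarrow> 'a jor \<Rightarrow> 'a jor" where
  "jor_add (Jor a b c x y z) (Jor a' b' c' x' y' z') =
     Jor (a + a') (b + b') (c + c') (oct_add x x') (oct_add y y') (oct_add z z')"

definition jor_smul :: "'a::times \<Rightarrow> 'a jor \<Rightarrow> 'a jor" where
  "jor_smul t X = jor_map (\<lambda>s. t * s) X"

definition jone :: "'a::{zero,one} jor" where
  "jone = Jor 1 1 1 (oct_scalar 0) (oct_scalar 0) (oct_scalar 0)"

fun jent :: "'a::{zero,uminus} jor \<Rightarrow> nat \<Rightarrow> nat \<Rightarrow> 'a oct" where
  "jent (Jor a b c x y z) i j =
     (if i = 0 \<and> j = 0 then oct_scalar a else if i = 0 \<and> j = 1 then z
      else if i = 0 \<and> j = 2 then oct_cnj y else if i = 1 \<and> j = 0 then oct_cnj z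
      else if i = 1 \<and> j = 1 then oct_scalar b else if i = 1 \<and> j = 2 then x
      else if i = 2 \<and> j = 0 then y else if i = 2 \<and> j = 1 then oct_cnj x
      else oct_scalar c)"

definition jmatmul :: "'a::comm_ring_1 jor \<Rightarrow> 'a jor \<Rightarrow> nat \<Rightarrow> nat \<Rightarrow> 'a oct" where
  "jmatmul X Y i j = oct_add (oct_add (oct_mul (jent X i 0) (jent Y 0 j))
       (oct_mul (jent X i 1) (jent Y 1 j))) (oct_mul (jent X i 2) (jent Y 2 j))"

definition jprod :: "'a::field jor \<Rightarrow> 'a jor \<Rightarrow> 'a jor" where
  "jprod X Y = (let M = (\<lambda>i j. oct_smul (1/2) (oct_add (jmatmul X Y i j) (jmatmul Y X i j)))
     in Jor (oct_re (M 0 0)) (oct_re (M 1 1)) (oct_re (M 2 2)) (M 1 2) (M 2 0) (M 0 1))"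

fun jtr :: "'a::plus jor \<Rightarrow> 'a" where
  "jtr (Jor a b c x y z) = a + b + c"

definition jinner :: "'a::field jor \<Rightarrow> 'a jor \<Rightarrow> 'a" where
  "jinner X Y = jtr (jprod X Y)"

fun jdet :: "'a::comm_ring_1 jor \<Rightarrow> 'a" where
  "jdet (Jor a b c x y z) = a * b * c - a * oct_norm x - b * oct_norm y - c * oct_norm z
     + oct_tr (oct_mul (oct_mul x y) z)"

definition jsharp :: "'a::field jor \<Rightarrow> 'a jor" where
  "jsharp X = jor_add (jor_add (jprod X X) (jor_smul (- jtr X) X))
      (jor_smul ((jtr X ^ 2 - jtr (jprod X X)) / 2) jone)"

definition jinv :: "'a::field jor \<Rightarrow> 'a jor" where
  "jinv X = jor_smul (1 / jdet X) (jsharp X)"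

definition JZ :: "real jor set" where
  "JZ = {X. case X of Jor a b c x y z \<Rightarrow> a \<in> \<int> \<and> b \<in> \<int> \<and> c \<in> \<int> \<and> x \<in> oint \<and> y \<in> oint \<and> z \<in> oint}"

definition R3plus :: "real jor set" where
  "R3plus = {jprod X X | X. jdet X \<noteq> 0}"

definition JZpos :: "real jor set" where
  "JZpos = JZ \<inter> R3plus"

definition jC :: "real jor \<Rightarrow> complex jor" where
  "jC X = jor_map complex_of_real X"

definition tube :: "complex jor set" where
  "tube = {jor_add (jC X) (jor_smul \<i> (jC Y)) | X Y. Y \<in> R3plus}"

definition jor_of_vec :: "'a ^ 27 \<Rightarrow> 'a jor" where
  "jor_of_vec v = Jor (v$1) (v$2) (v$3)
     (Oct (v$4) (v$5) (v$6) (v$7) (v$8) (v$9) (v$10) (v$11))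
     (Oct (v$12) (v$13) (v$14) (v$15) (v$16) (v$17) (v$18) (v$19))
     (Oct (v$20) (v$21) (v$22) (v$23) (v$24) (v$25) (v$26) (v$27))"

definition holomorphic_jor :: "(complex jor \<Rightarrow> complex) \<Rightarrow> complex jor set \<Rightarrow> bool" where
  "holomorphic_jor F U \<longleftrightarrow> (\<forall>v. jor_of_vec v \<in> U \<longrightarrow>
     (\<exists>L. ((F \<circ> jor_of_vec) has_derivative L) (at v) \<and> (\<forall>c w. L (c *s w) = c * L w)))"

section \<open>The group G of type E7 via the Freudenthal triple system\<close>

type_synonym 'a fts = "'a \<times> 'a \<times> 'a jor \<times> 'a jor"

fun fts_q :: "'a::field fts \<Rightarrow> 'a" where
  "fts_q (al, be, A, B) = (al * be - jinner A B) ^ 2 + 4 * al * jdet B + 4 * be * jdet A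
     - 4 * jinner (jsharp A) (jsharp B)"

fun fts_symp :: "'a::field fts \<Rightarrow> 'a fts \<Rightarrow> 'a" where
  "fts_symp (al, be, A, B) (al', be', A', B') = al * be' - be * al' - jinner A B' + jinner B A'"

fun fts_add :: "'a::plus fts \<Rightarrow> 'a fts \<Rightarrow> 'a fts" where
  "fts_add (al, be, A, B) (al', be', A', B') = (al + al', be + be', jor_add A A', jor_add B B')"

fun fts_smul :: "'a::times \<Rightarrow> 'a fts \<Rightarrow> 'a fts" where
  "fts_smul t (al, be, A, B) = (t * al, t * be, jor_smul t A, jor_smul t B)"

fun fts_map :: "('a \<Rightarrow> 'b) \<Rightarrow> 'a fts \<Rightarrow> 'b fts" where
  "fts_map f (al, be, A, B) = (f al, f be, jor_map f A, jor_map f B)"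

definition GR :: "(real fts \<Rightarrow> real fts) set" where
  "GR = {g. (\<forall>x y. g (fts_add x y) = fts_add (g x) (g y)) \<and> (\<forall>c x. g (fts_smul c x) = fts_smul c (g x))
      \<and> bij g \<and> (\<forall>x. fts_q (g x) = fts_q x) \<and> (\<forall>x y. fts_symp (g x) (g y) = fts_symp x y)}"

definition fts_lattice :: "real fts set" where
  "fts_lattice = {(al, be, A, B). al \<in> \<int> \<and> be \<in> \<int> \<and> A \<in> JZ \<and> B \<in> JZ}"

definition GZ :: "(real fts \<Rightarrow> real fts) set" where
  "GZ = {g \<in> GR. g ` fts_lattice = fts_lattice}"

definition cext :: "(real fts \<Rightarrow> real fts) \<Rightarrow> complex fts \<Rightarrow> complex fts" where
  "cext g x = fts_add (fts_map complex_of_real (g (fts_map Re x)))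
                      (fts_smul \<i> (fts_map complex_of_real (g (fts_map Im x))))"

text \<open>Z |-> (1, det Z, Z, Z#); g acts by g (emb Z) = j(g,Z) (emb (g<Z>)).\<close>
definition femb :: "complex jor \<Rightarrow> complex fts" where
  "femb Z = (1, jdet Z, Z, jsharp Z)"

definition ee :: "complex \<Rightarrow> complex" where
  "ee z = exp (2 * of_real pi * \<i> * z)"

definition is_cusp_form :: "nat \<Rightarrow> (complex jor \<Rightarrow> complex) \<Rightarrow> (real jor \<Rightarrow> complex) \<Rightarrow> bool" where
  "is_cusp_form k F a \<longleftrightarrow>
     holomorphic_jor F tube \<and>
     (\<forall>g\<in>GZ. \<forall>Z\<in>tube. \<forall>W\<in>tube. \<forall>j. cext g (femb Z) = fts_smul j (femb W) \<longrightarrow> F W = j ^ k * F Z) \<and>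
     (\<forall>Z\<in>tube. (\<lambda>T. a T * ee (jinner (jC T) Z)) summable_on JZpos \<and>
                F Z = (\<Sum>\<^sub>\<infinity>T\<in>JZpos. a T * ee (jinner (jC T) Z)))"

section \<open>Dirichlet characters and twists\<close>

definition dchar :: "nat \<Rightarrow> (int \<Rightarrow> complex) \<Rightarrow> bool" where
  "dchar N chi \<longleftrightarrow> N > 0 \<and> chi 1 = 1 \<and> (\<forall>a b. chi (a * b) = chi a * chi b) \<and>
     (\<forall>a. chi (a + int N) = chi a) \<and> (\<forall>a. chi a = 0 \<longleftrightarrow> \<not> coprime a (int N))"

definition primitive_dchar :: "nat \<Rightarrow> (int \<Rightarrow> complex) \<Rightarrow> bool" where
  "primitive_dchar N chi \<longleftrightarrow> dchar N chi \<and>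
     (\<forall>d. 0 < d \<and> d dvd N \<and> d < N \<longrightarrow>
        \<not> (\<forall>a. coprime a (int N) \<and> a mod int d = 1 mod int d \<longrightarrow> chi a = 1))"

definition gauss_sum :: "nat \<Rightarrow> (int \<Rightarrow> complex) \<Rightarrow> complex" where
  "gauss_sum N chi = (\<Sum>a<N. chi (int a) * ee (of_nat a / of_nat N))"

definition twist :: "(int \<Rightarrow> complex) \<Rightarrow> (real jor \<Rightarrow> complex) \<Rightarrow> complex jor \<Rightarrow> complex" where
  "twist chi a Z = (\<Sum>\<^sub>\<infinity>T\<in>JZpos. chi \<lfloor>jtr T\<rfloor> * a T * ee (jinner (jC T) Z))"

end

theory Submission
  imports Defs "HOL-Number_Theory.Cong"
begin

text \<open>Expanding \<open>\<chi>(Tr T)\<close> by the Gauss sum of \<open>cnj \<chi>\<close> writes \<open>F\<^sub>\<chi>(Z)\<close> as a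
  combination of the translates \<open>F(Z + b/N E)\<close>.  For \<open>b\<close> prime to \<open>N\<close> choose \<open>c\<close> with
  \<open>b c \<equiv> -1 (mod N)\<close>; the element of \<open>G(\<int>)\<close> given by the integral matrix \<open>[[b, q], [N, -c]]\<close>,
  acting through the Freudenthal triple system, maps \<open>c/N E + iY\<close> to \<open>b/N E + i(N\<^sup>2Y)\<inverse>\<close> with
  automorphy factor \<open>i N\<^sup>3 det Y\<close>.  Expanding the translates \<open>F(c/N E + iY)\<close> again and summing
  over \<open>b\<close>, a second Gauss sum recombines them into \<open>F\<^bsub>cnj \<chi>\<^esub>(iY)\<close>.  The constant comes
  from \<open>W(cnj \<chi>) = \<chi>(-1) cnj W(\<chi>)\<close> and \<open>|W(\<chi>)|\<^sup>2 = N\<close>.\<close>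

section \<open>Coordinates on the exceptional Jordan algebra\<close>

fun oct_dot :: "'a::comm_ring_1 oct \<Rightarrow> 'a oct \<Rightarrow> 'a" where
  "oct_dot (Oct x0 x1 x2 x3 x4 x5 x6 x7) (Oct y0 y1 y2 y3 y4 y5 y6 y7) =
     x0*y0 + x1*y1 + x2*y2 + x3*y3 + x4*y4 + x5*y5 + x6*y6 + x7*y7"

lemma jor_cases:
  obtains a b c x0 x1 x2 x3 x4 x5 x6 x7 y0 y1 y2 y3 y4 y5 y6 y7 z0 z1 z2 z3 z4 z5 z6 z7
  where "X = Jor a b c (Oct x0 x1 x2 x3 x4 x5 x6 x7) (Oct y0 y1 y2 y3 y4 y5 y6 y7)
                       (Oct z0 z1 z2 z3 z4 z5 z6 z7)"
  by (metis jor.exhaust oct.exhaust)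

lemma jsharp_Jor:
  fixes a b c :: "'a::field_char_0"
  shows "jsharp (Jor a b c x y z) = Jor (b*c - oct_norm x) (c*a - oct_norm y) (a*b - oct_norm z)
    (oct_add (oct_cnj (oct_mul y z)) (oct_smul (-a) x))
    (oct_add (oct_cnj (oct_mul z x)) (oct_smul (-b) y))
    (oct_add (oct_cnj (oct_mul x y)) (oct_smul (-c) z))"
  apply (cases x; cases y; cases z)
  apply (simp add: jsharp_def jprod_def jmatmul_def jone_def jor_smul_def oct_smul_def
      oct_scalar_def oct_re_def oct_norm_def Let_def power2_eq_square)
  apply (intro conjI; simp add: algebra_simps field_simps)
  done

lemma jinner_Jor:
  fixes a b c :: "'a::field_char_0"
  shows "jinner (Jor a b c x y z) (Jor a' b' c' x' y' z') =
    a*a' + b*b' + c*c' + 2 * (oct_dot x x' + oct_dot y y' + oct_dot z z')"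
  apply (cases x; cases y; cases z; cases x'; cases y'; cases z')
  apply (simp add: jinner_def jprod_def jmatmul_def oct_smul_def oct_scalar_def oct_re_def Let_def)
  apply (simp add: algebra_simps field_simps)
  done

lemma jprod_self_Jor:
  fixes a b c :: "'a::field_char_0"
  shows "jprod (Jor a b c x y z) (Jor a b c x y z) =
    Jor (a*a + oct_norm z + oct_norm y) (b*b + oct_norm z + oct_norm x) (c*c + oct_norm y + oct_norm x)
      (oct_add (oct_smul (b + c) x) (oct_cnj (oct_mul y z)))
      (oct_add (oct_smul (c + a) y) (oct_cnj (oct_mul z x)))
      (oct_add (oct_smul (a + b) z) (oct_cnj (oct_mul x y)))"
  apply (cases x; cases y; cases z)
  apply (simp add: jprod_def jmatmul_def oct_smul_def oct_scalar_def oct_re_def oct_norm_def Let_def)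
  apply (intro conjI; simp add: algebra_simps field_simps)
  done

lemmas jor_coord_simps = jsharp_Jor jinner_Jor jprod_self_Jor jdet.simps jtr.simps
  jor_smul_def jor_map.simps jor_add.simps jone_def oct_mul.simps oct_add.simps oct_smul_def
  oct_map.simps oct_re_def oct_tr_def oct_norm_def oct_cnj.simps ocomp.simps nth_Cons_0
  oct.inject jor.inject oct_scalar_def oct_dot.simps

lemma jsharp_sharp:
  fixes X :: "'a::field_char_0 jor" shows "jsharp (jsharp X) = jor_smul (jdet X) X"
  by (cases X rule: jor_cases; hypsubst_thin; simp only: jor_coord_simps; (intro conjI)?;
      (rule TrueI | algebra | simp add: algebra_simps power2_eq_square power3_eq_cube))

lemma jdet_sharp:
  fixes X :: "'a::field_char_0 jor" shows "jdet (jsharp X) = jdet X ^ 2"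
  by (cases X rule: jor_cases; hypsubst_thin; simp only: jor_coord_simps;
      (rule TrueI | algebra | simp add: algebra_simps power2_eq_square power3_eq_cube))

lemma jsharp_jprod_self:
  fixes X :: "'a::field_char_0 jor" shows "jsharp (jprod X X) = jprod (jsharp X) (jsharp X)"
  by (cases X rule: jor_cases; hypsubst_thin; simp only: jor_coord_simps; (intro conjI)?;
      (rule TrueI | algebra | simp add: algebra_simps power2_eq_square power3_eq_cube))

lemma jdet_jprod_self:
  fixes X :: "'a::field_char_0 jor" shows "jdet (jprod X X) = jdet X ^ 2"
  by (cases X rule: jor_cases; hypsubst_thin; simp only: jor_coord_simps;
      (rule TrueI | algebra | simp add: algebra_simps power2_eq_square power3_eq_cube))

lemma jdet_smul:
  fixes X :: "'a::field_char_0 jor" shows "jdet (jor_smul c X) = c ^ 3 * jdet X"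
  by (cases X rule: jor_cases; hypsubst_thin; simp only: jor_coord_simps;
      (rule TrueI | algebra | simp add: algebra_simps power2_eq_square power3_eq_cube))

lemma jsharp_smul:
  fixes X :: "'a::field_char_0 jor" shows "jsharp (jor_smul c X) = jor_smul (c ^ 2) (jsharp X)"
  by (cases X rule: jor_cases; hypsubst_thin; simp only: jor_coord_simps; (intro conjI)?;
      (rule TrueI | algebra | simp add: algebra_simps power2_eq_square power3_eq_cube))

lemma jprod_self_smul:
  fixes X :: "'a::field_char_0 jor"
  shows "jprod (jor_smul c X) (jor_smul c X) = jor_smul (c ^ 2) (jprod X X)"
  by (cases X rule: jor_cases; hypsubst_thin; simp only: jor_coord_simps; (intro conjI)?;
      (rule TrueI | algebra | simp add: algebra_simps power2_eq_square power3_eq_cube))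

lemma jinner_add_smul_jone:
  fixes X :: "'a::field_char_0 jor"
  shows "jinner X (jor_add (jor_smul u jone) Y) = u * jtr X + jinner X Y"
  by (cases X rule: jor_cases; cases Y rule: jor_cases; hypsubst_thin;
      simp only: jor_coord_simps mult_1_right mult_zero_right add_0_left add_0_right;
      simp add: algebra_simps)

lemma jor_smul_smul: "jor_smul c (jor_smul d X) = jor_smul (c * d) (X :: 'a::semigroup_mult jor)"
  by (cases X rule: jor_cases) (simp add: jor_smul_def mult.assoc)

lemma jor_smul_one: "jor_smul 1 X = (X :: 'a::monoid_mult jor)"
  by (cases X rule: jor_cases) (simp add: jor_smul_def)

lemma jor_add_commute: "jor_add X Y = jor_add Y (X :: 'a::ab_semigroup_add jor)"
  by (cases X rule: jor_cases; cases Y rule: jor_cases) (simp add: add.commute)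

lemma jor_add_smul_jone_cancel:
  fixes X :: "'a::field_char_0 jor"
  shows "jor_add (jor_add (jor_smul u jone) X) (jor_smul (- u) jone) = X"
  by (cases X rule: jor_cases) (simp add: jor_coord_simps)

lemma jinv_smul:
  fixes X :: "'a::field_char_0 jor" assumes "c \<noteq> 0"
  shows "jinv (jor_smul c X) = jor_smul (1 / c) (jinv X)"
  using assms by (simp add: jinv_def jdet_smul jsharp_smul jor_smul_smul power2_eq_square
      power3_eq_cube field_simps)

section \<open>The Freudenthal triple system\<close>

text \<open>Translations, the flip and dilations generate the image of \<open>SL\<^sub>2\<close> in the group \<open>G\<close>.\<close>

definition fts_translate :: "'a::field_char_0 \<Rightarrow> 'a fts \<Rightarrow> 'a fts" where
  "fts_translate t x = (case x of (al, be, A, C) \<Rightarrow>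
     (al, be + t * jtr C + t^2 * jtr A + t^3 * al,
      jor_add A (jor_smul (t * al) jone),
      jor_add (jor_add C (jor_smul (- t) A)) (jor_smul (t * jtr A + t^2 * al) jone)))"

definition fts_flip :: "'a::field_char_0 fts \<Rightarrow> 'a fts" where
  "fts_flip x = (case x of (al, be, A, C) \<Rightarrow> (- be, al, C, jor_smul (-1) A))"

definition fts_dilate :: "'a::field_char_0 \<Rightarrow> 'a \<Rightarrow> 'a fts \<Rightarrow> 'a fts" where
  "fts_dilate r ri x = (case x of (al, be, A, C) \<Rightarrow> (ri^3 * al, r^3 * be, jor_smul ri A, jor_smul r C))"

definition fts_embed :: "'a::field_char_0 jor \<Rightarrow> 'a fts" where
  "fts_embed Z = (1, jdet Z, Z, jsharp Z)"

lemma femb_eq_fts_embed: "femb Z = fts_embed Z"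
  by (simp add: femb_def fts_embed_def)

lemma fts_cases:
  obtains al be a b c x0 x1 x2 x3 x4 x5 x6 x7 y0 y1 y2 y3 y4 y5 y6 y7 z0 z1 z2 z3 z4 z5 z6 z7
     a' b' c' x0' x1' x2' x3' x4' x5' x6' x7' y0' y1' y2' y3' y4' y5' y6' y7'
     z0' z1' z2' z3' z4' z5' z6' z7'
  where "(x :: 'a fts) = (al, be,
     Jor a b c (Oct x0 x1 x2 x3 x4 x5 x6 x7) (Oct y0 y1 y2 y3 y4 y5 y6 y7) (Oct z0 z1 z2 z3 z4 z5 z6 z7),
     Jor a' b' c' (Oct x0' x1' x2' x3' x4' x5' x6' x7') (Oct y0' y1' y2' y3' y4' y5' y6' y7')
       (Oct z0' z1' z2' z3' z4' z5' z6' z7'))"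
proof -
  obtain al be A C where x: "x = (al, be, A, C)" by (cases x)
  show ?thesis by (cases A rule: jor_cases; cases C rule: jor_cases) (rule that, simp add: x)
qed

lemmas fts_coord_simps = jor_coord_simps fts_translate_def fts_flip_def fts_dilate_def prod.case
  fts_q.simps fts_symp.simps fts_add.simps fts_smul.simps fts_embed_def prod.inject

lemma fts_translate_q: fixes x :: "'a::field_char_0 fts" shows "fts_q (fts_translate t x) = fts_q x"
  by (cases x rule: fts_cases; hypsubst_thin; simp only: fts_coord_simps; (intro conjI)?;
      (rule TrueI | algebra | simp add: algebra_simps power2_eq_square power3_eq_cube))

lemma fts_translate_symp:
  fixes x :: "'a::field_char_0 fts" shows "fts_symp (fts_translate t x) (fts_translate t y) = fts_symp x y"
  by (cases x rule: fts_cases; cases y rule: fts_cases; hypsubst_thin; simp only: fts_coord_simps;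
      (intro conjI)?; (rule TrueI | algebra | simp add: algebra_simps power2_eq_square power3_eq_cube))

lemma fts_translate_smul:
  fixes x :: "'a::field_char_0 fts" shows "fts_translate t (fts_smul c x) = fts_smul c (fts_translate t x)"
  by (cases x rule: fts_cases; hypsubst_thin; simp only: fts_coord_simps; (intro conjI)?;
      (rule TrueI | algebra | simp add: algebra_simps power2_eq_square power3_eq_cube))

lemma fts_translate_embed:
  fixes Z :: "'a::field_char_0 jor"
  shows "fts_translate t (fts_embed Z) = fts_embed (jor_add Z (jor_smul t jone))"
  by (cases Z rule: jor_cases; hypsubst_thin; simp only: fts_coord_simps; (intro conjI)?;
      (rule TrueI | algebra | simp add: algebra_simps power2_eq_square power3_eq_cube))

lemma fts_flip_q: fixes x :: "'a::field_char_0 fts" shows "fts_q (fts_flip x) = fts_q x"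
  by (cases x rule: fts_cases; hypsubst_thin; simp only: fts_coord_simps; (intro conjI)?;
      (rule TrueI | algebra | simp add: algebra_simps power2_eq_square power3_eq_cube))

lemma fts_flip_symp:
  fixes x :: "'a::field_char_0 fts" shows "fts_symp (fts_flip x) (fts_flip y) = fts_symp x y"
  by (cases x rule: fts_cases; cases y rule: fts_cases; hypsubst_thin; simp only: fts_coord_simps;
      (intro conjI)?; (rule TrueI | algebra | simp add: algebra_simps power2_eq_square power3_eq_cube))

lemma fts_flip_smul:
  fixes x :: "'a::field_char_0 fts" shows "fts_flip (fts_smul c x) = fts_smul c (fts_flip x)"
  by (cases x rule: fts_cases; hypsubst_thin; simp only: fts_coord_simps; (intro conjI)?;
      (rule TrueI | algebra | simp add: algebra_simps power2_eq_square power3_eq_cube))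

lemma fts_flip_embed:
  fixes Z :: "'a::field_char_0 jor" assumes "jdet Z \<noteq> 0"
  shows "fts_flip (fts_embed Z) = fts_smul (- jdet Z) (fts_embed (jor_smul (-1) (jinv Z)))"
proof -
  have "jor_smul (-1) (jinv Z) = jor_smul (- (1 / jdet Z)) (jsharp Z)"
    by (simp add: jinv_def jor_smul_smul)
  then show ?thesis using assms
    by (simp add: fts_embed_def fts_flip_def jdet_smul jsharp_smul jsharp_sharp jdet_sharp
        jor_smul_smul jor_smul_one power2_eq_square power3_eq_cube field_simps)
qed

lemma fts_dilate_q:
  fixes x :: "'a::field_char_0 fts" assumes "r * ri = 1" shows "fts_q (fts_dilate r ri x) = fts_q x"
  using assms
  by (cases x rule: fts_cases; hypsubst_thin; simp only: fts_coord_simps; (intro conjI)?;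
      (rule TrueI | algebra | simp add: algebra_simps power2_eq_square power3_eq_cube))

lemma fts_dilate_symp:
  fixes x :: "'a::field_char_0 fts" assumes "r * ri = 1"
  shows "fts_symp (fts_dilate r ri x) (fts_dilate r ri y) = fts_symp x y"
  using assms
  by (cases x rule: fts_cases; cases y rule: fts_cases; hypsubst_thin; simp only: fts_coord_simps;
      (intro conjI)?; (rule TrueI | algebra | simp add: algebra_simps power2_eq_square power3_eq_cube))

lemma fts_dilate_embed:
  fixes Z :: "'a::field_char_0 jor" assumes "r * ri = 1"
  shows "fts_dilate r ri (fts_embed Z) = fts_smul (ri ^ 3) (fts_embed (jor_smul (r ^ 2) Z))"
  using assms
  by (cases Z rule: jor_cases; hypsubst_thin; simp only: fts_coord_simps; (intro conjI)?;
      (rule TrueI | algebra | simp add: algebra_simps power2_eq_square power3_eq_cube))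

lemma fts_smul_smul:
  fixes x :: "'a::field_char_0 fts" shows "fts_smul a (fts_smul b x) = fts_smul (a * b) x"
  by (cases x rule: fts_cases) (simp add: fts_coord_simps mult.assoc)

text \<open>The matrix \<open>[[p, q], [r, s]]\<close> of determinant one acts on the triple system by the closed
  formula below; for \<open>r \<noteq> 0\<close> it is the product of the generators given by the Bruhat
  decomposition \<open>[[p, q], [r, s]] = [[1, p/r], [0, 1]] [[0, -1], [1, 0]] [[r, 0], [0, 1/r]] [[1, s/r], [0, 1]]\<close>.
  The closed formula has integral coefficients, which makes integrality evident.\<close>

definition fts_sl2 :: "'a::field_char_0 \<Rightarrow> 'a \<Rightarrow> 'a \<Rightarrow> 'a \<Rightarrow> 'a fts \<Rightarrow> 'a fts" where
  "fts_sl2 p q r s x = (case x of (al, be, A, C) \<Rightarrow>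
    (- (s^3 * al + s^2 * r * jtr A + s * r^2 * jtr C + r^3 * be),
     - (p^3 * be + p^2 * q * jtr C + p * q^2 * jtr A + q^3 * al),
     jor_add (jor_add (jor_smul r C) (jor_smul (- s) A))
       (jor_smul (- (p * r^2 * be + p * r * s * jtr C + q * r * s * jtr A + q * s^2 * al)) jone),
     jor_add (jor_add (jor_smul q A) (jor_smul (- p) C))
       (jor_smul (- (p^2 * r * be + p * q * r * jtr C + p * q * s * jtr A + q^2 * s * al)) jone)))"

lemma fts_sl2_decompose:
  fixes x :: "'a::field_char_0 fts"
  assumes "r * ri = 1" "p * s - q * r = 1"
  shows "fts_sl2 p q r s x =
    fts_translate (p * ri) (fts_flip (fts_dilate r ri (fts_translate (s * ri) x)))"
  using assms unfolding fts_sl2_def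
  by (cases x rule: fts_cases; hypsubst_thin; simp only: fts_coord_simps; (intro conjI)?;
      (rule TrueI | algebra | simp add: algebra_simps power2_eq_square power3_eq_cube))

lemma fts_sl2_inverse:
  fixes x :: "'a::field_char_0 fts" assumes "p * s - q * r = 1"
  shows "fts_sl2 p q r s (fts_sl2 s (- q) (- r) p x) = x"
  using assms unfolding fts_sl2_def
  by (cases x rule: fts_cases; hypsubst_thin; simp only: fts_coord_simps; (intro conjI)?;
      (rule TrueI | algebra | simp add: algebra_simps power2_eq_square power3_eq_cube))

lemma fts_sl2_add:
  fixes x :: "'a::field_char_0 fts"
  shows "fts_sl2 p q r s (fts_add x y) = fts_add (fts_sl2 p q r s x) (fts_sl2 p q r s y)"
  unfolding fts_sl2_def
  by (cases x rule: fts_cases; cases y rule: fts_cases; hypsubst_thin; simp only: fts_coord_simps;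
      (intro conjI)?; (rule TrueI | algebra | simp add: algebra_simps power2_eq_square power3_eq_cube))

lemma fts_sl2_smul:
  fixes x :: "'a::field_char_0 fts"
  shows "fts_sl2 p q r s (fts_smul c x) = fts_smul c (fts_sl2 p q r s x)"
  unfolding fts_sl2_def
  by (cases x rule: fts_cases; hypsubst_thin; simp only: fts_coord_simps; (intro conjI)?;
      (rule TrueI | algebra | simp add: algebra_simps power2_eq_square power3_eq_cube))

lemma fts_sl2_q:
  fixes x :: "'a::field_char_0 fts" assumes "r \<noteq> 0" "p * s - q * r = 1"
  shows "fts_q (fts_sl2 p q r s x) = fts_q x"
  using assms by (simp add: fts_sl2_decompose[where ri = "1 / r"] fts_translate_q fts_flip_q fts_dilate_q)

lemma fts_sl2_symp:
  fixes x :: "'a::field_char_0 fts" assumes "r \<noteq> 0" "p * s - q * r = 1"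
  shows "fts_symp (fts_sl2 p q r s x) (fts_sl2 p q r s y) = fts_symp x y"
  using assms
  by (simp add: fts_sl2_decompose[where ri = "1 / r"] fts_translate_symp fts_flip_symp fts_dilate_symp)

lemma fts_sl2_of_real:
  "fts_sl2 (complex_of_real p) (of_real q) (of_real r) (of_real s) (fts_map of_real x) =
   fts_map of_real (fts_sl2 p q r s x)"
  unfolding fts_sl2_def
  by (cases x rule: fts_cases; hypsubst_thin;
      simp only: fts_coord_simps fts_map.simps jor_map.simps oct_map.simps of_real_add of_real_mult
        of_real_diff of_real_minus of_real_power of_real_1 of_real_0 of_real_numeral;
      (intro conjI)?; (rule TrueI | rule refl | algebra | simp add: algebra_simps))

lemma fts_sl2_embed:
  fixes Z V :: "'a::field_char_0 jor"
  assumes r: "r \<noteq> 0" and det: "p * s - q * r = 1"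
    and V: "V = jor_add Z (jor_smul (s / r) jone)" and dV: "jdet V \<noteq> 0"
  shows "fts_sl2 p q r s (fts_embed Z) = fts_smul (- (r ^ 3 * jdet V))
    (fts_embed (jor_add (jor_smul (-1) (jinv (jor_smul (r ^ 2) V))) (jor_smul (p / r) jone)))"
proof -
  have rr: "r * (1 / r) = 1" using r by simp
  have dV': "jdet (jor_smul (r ^ 2) V) \<noteq> 0" using r dV by (simp add: jdet_smul)
  have "fts_sl2 p q r s (fts_embed Z) = fts_translate (p / r) (fts_flip (fts_dilate r (1 / r) (fts_embed V)))"
    by (simp add: fts_sl2_decompose[OF rr det] fts_translate_embed V)
  also have "\<dots> = fts_translate (p / r) (fts_smul ((1 / r) ^ 3) (fts_flip (fts_embed (jor_smul (r ^ 2) V))))"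
    by (simp add: fts_dilate_embed[OF rr] fts_flip_smul)
  also have "\<dots> = fts_smul ((1 / r) ^ 3 * - jdet (jor_smul (r ^ 2) V))
      (fts_embed (jor_add (jor_smul (-1) (jinv (jor_smul (r ^ 2) V))) (jor_smul (p / r) jone)))"
    by (simp add: fts_flip_embed[OF dV'] fts_smul_smul fts_translate_smul fts_translate_embed)
  also have "(1 / r) ^ 3 * - jdet (jor_smul (r ^ 2) V) = - (r ^ 3 * jdet V)"
    using r by (simp add: jdet_smul field_simps eval_nat_numeral)
  finally show ?thesis .
qed

section \<open>The integral structure\<close>

lemma less_8_iff: "(i::nat) < 8 \<longleftrightarrow> i = 0 \<or> i = 1 \<or> i = 2 \<or> i = 3 \<or> i = 4 \<or> i = 5 \<or> i = 6 \<or> i = 7"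
  by auto

lemma oint_code_symmetric_difference:
  assumes "S \<in> oint_code" "T \<in> oint_code"
  shows "{i. i < 8 \<and> (i \<in> S) \<noteq> (i \<in> T)} \<in> oint_code"
proof -
  have "{i::nat. i < 8 \<and> P i} = set (filter P [0,1,2,3,4,5,6,7])" for P
    unfolding set_filter less_8_iff by auto
  then show ?thesis using assms unfolding oint_code_def by (elim insertE emptyE; hypsubst_thin; simp)
qed

lemma ocomp_add: "i < 8 \<Longrightarrow> ocomp (oct_add x y) i = ocomp x i + ocomp y i"
  by (cases x; cases y) (auto simp: less_8_iff)

lemma ocomp_smul: "i < 8 \<Longrightarrow> ocomp (oct_smul c x) i = c * ocomp x i"
  by (cases x) (auto simp: less_8_iff oct_smul_def)

lemma half_odd_iff_odd: "2 * u = of_int m \<Longrightarrow> half_odd u \<longleftrightarrow> odd m"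
proof -
  assume h: "2 * u = of_int m"
  have "(of_int m = (2 * of_int n + 1 :: real)) \<longleftrightarrow> m = 2 * n + 1" for n :: int
  proof -
    have "(2 * of_int n + 1 :: real) = of_int (2 * n + 1)" by simp
    then show ?thesis by (simp only: of_int_eq_iff)
  qed
  then have "half_odd u \<longleftrightarrow> (\<exists>n. m = 2 * n + 1)" unfolding half_odd_def h by simp
  also have "\<dots> \<longleftrightarrow> odd m" by (auto elim: oddE)
  finally show ?thesis .
qed

lemma oint_add:
  assumes "x \<in> oint" "y \<in> oint" shows "oct_add x y \<in> oint"
proof -
  have ix: "\<forall>i<8. 2 * ocomp x i \<in> \<int>" and cx: "{i. i < 8 \<and> half_odd (ocomp x i)} \<in> oint_code"
    and iy: "\<forall>i<8. 2 * ocomp y i \<in> \<int>" and cy: "{i. i < 8 \<and> half_odd (ocomp y i)} \<in> oint_code"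
    using assms by (auto simp: oint_def)
  have "half_odd (ocomp (oct_add x y) i) \<longleftrightarrow> half_odd (ocomp x i) \<noteq> half_odd (ocomp y i)"
    if i: "i < 8" for i
  proof -
    obtain m n where m: "2 * ocomp x i = of_int m" and n: "2 * ocomp y i = of_int n"
      using ix iy i Ints_cases by metis
    have "2 * ocomp (oct_add x y) i = of_int (m + n)" using m n i by (simp add: ocomp_add distrib_left)
    from half_odd_iff_odd[OF this] show ?thesis using half_odd_iff_odd[OF m] half_odd_iff_odd[OF n] by simp
  qed
  then have "{i. i < 8 \<and> half_odd (ocomp (oct_add x y) i)} =
      {i. i < 8 \<and> (i \<in> {i. i < 8 \<and> half_odd (ocomp x i)}) \<noteq> (i \<in> {i. i < 8 \<and> half_odd (ocomp y i)})}"
    by auto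
  then show ?thesis
    using ix iy oint_code_symmetric_difference[OF cx cy] by (simp add: oint_def ocomp_add distrib_left)
qed

lemma oint_smul:
  assumes "x \<in> oint" "k \<in> \<int>" shows "oct_smul k x \<in> oint"
proof -
  obtain n where k: "k = of_int n" using assms(2) Ints_cases by metis
  have ix: "\<forall>i<8. 2 * ocomp x i \<in> \<int>" and cx: "{i. i < 8 \<and> half_odd (ocomp x i)} \<in> oint_code"
    using assms(1) by (auto simp: oint_def)
  have "half_odd (ocomp (oct_smul k x) i) \<longleftrightarrow> odd n \<and> half_odd (ocomp x i)" if i: "i < 8" for i
  proof -
    obtain m where m: "2 * ocomp x i = of_int m" using ix i Ints_cases by metis
    have "2 * ocomp (oct_smul k x) i = of_int (n * m)" using m i k by (simp add: ocomp_smul mult.left_commute)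
    from half_odd_iff_odd[OF this] show ?thesis using half_odd_iff_odd[OF m] by simp
  qed
  then have "{i. i < 8 \<and> half_odd (ocomp (oct_smul k x) i)} =
      (if even n then {} else {i. i < 8 \<and> half_odd (ocomp x i)})"
    by auto
  then have "{i. i < 8 \<and> half_odd (ocomp (oct_smul k x) i)} \<in> oint_code"
    using cx by (simp add: oint_code_def)
  moreover have "\<forall>i<8. 2 * ocomp (oct_smul k x) i \<in> \<int>"
    using ix assms(2) by (simp add: ocomp_smul mult.left_commute)
  ultimately show ?thesis by (simp add: oint_def)
qed

lemma oint_zero: "oct_scalar 0 \<in> oint"
proof -
  have "ocomp (oct_scalar (0::real)) i = 0" if "i < 8" for i
    using that by (auto simp: oct_scalar_def less_8_iff)
  moreover have "\<not> half_odd (0::real)" using half_odd_iff_odd[of 0 0] by simp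
  ultimately show ?thesis by (simp add: oint_def oint_code_def)
qed

lemma JZ_add: "X \<in> JZ \<Longrightarrow> Y \<in> JZ \<Longrightarrow> jor_add X Y \<in> JZ"
  by (cases X; cases Y) (simp add: JZ_def oint_add Ints_add)

lemma JZ_smul: "k \<in> \<int> \<Longrightarrow> X \<in> JZ \<Longrightarrow> jor_smul k X \<in> JZ"
  by (cases X) (simp add: JZ_def jor_smul_def oint_smul Ints_mult flip: oct_smul_def)

lemma jone_JZ: "jone \<in> JZ"
  by (simp add: jone_def JZ_def oint_zero)

lemma jtr_JZ: "X \<in> JZ \<Longrightarrow> jtr X \<in> \<int>"
  by (cases X) (simp add: JZ_def Ints_add)

lemma fts_sl2_lattice:
  assumes "p \<in> \<int>" "q \<in> \<int>" "r \<in> \<int>" "s \<in> \<int>" "x \<in> fts_lattice"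
  shows "fts_sl2 p q r s x \<in> fts_lattice"
proof -
  obtain al be A C where x: "x = (al, be, A, C)" by (cases x)
  then have "al \<in> \<int>" "be \<in> \<int>" "A \<in> JZ" "C \<in> JZ" "jtr A \<in> \<int>" "jtr C \<in> \<int>"
    using assms(5) jtr_JZ by (auto simp: fts_lattice_def)
  then show ?thesis using assms(1-4) unfolding x fts_sl2_def fts_lattice_def
    by (auto intro!: JZ_add JZ_smul jone_JZ Ints_add Ints_mult Ints_minus Ints_power Ints_diff)
qed

lemma fts_sl2_GZ:
  fixes p q r s :: int
  assumes r: "r \<noteq> 0" and det: "p * s - q * r = 1"
  shows "fts_sl2 (of_int p) (of_int q) (of_int r) (of_int s) \<in> GZ"
proof -
  let ?g = "fts_sl2 (of_int p) (of_int q) (of_int r) (of_int s) :: real fts \<Rightarrow> real fts"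
  let ?h = "fts_sl2 (of_int s) (- of_int q) (- of_int r) (of_int p) :: real fts \<Rightarrow> real fts"
  have det': "real_of_int p * of_int s - of_int q * of_int r = 1"
    using det by (metis of_int_1 of_int_diff of_int_mult)
  have gh: "?g (?h x) = x" for x using fts_sl2_inverse[OF det'] by simp
  have hg: "?h (?g x) = x" for x
    using fts_sl2_inverse[where p = "of_int s" and s = "of_int p" and q = "- of_int q" and r = "- of_int r"] det'
    by (simp add: algebra_simps)
  have "?g \<in> GR"
    unfolding GR_def
  proof (intro CollectI conjI allI)
    show "bij ?g" by (rule o_bij[where g = ?h]; rule ext; simp add: gh hg)
  qed (use r in \<open>simp_all add: fts_sl2_add fts_sl2_smul fts_sl2_q[OF _ det'] fts_sl2_symp[OF _ det']\<close>)
  moreover have "?g ` fts_lattice = fts_lattice"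
  proof
    show "?g ` fts_lattice \<subseteq> fts_lattice" using fts_sl2_lattice by auto
    show "fts_lattice \<subseteq> ?g ` fts_lattice"
    proof
      fix x assume "x \<in> fts_lattice"
      then have "?h x \<in> fts_lattice" by (intro fts_sl2_lattice) (simp_all add: Ints_minus)
      with gh[of x] show "x \<in> ?g ` fts_lattice" by (metis image_eqI)
    qed
  qed
  ultimately show ?thesis by (simp add: GZ_def)
qed

section \<open>Complexification and the action on the tube domain\<close>

lemma fts_Re_Im_decompose:
  fixes w :: "complex fts"
  shows "w = fts_add (fts_map of_real (fts_map Re w)) (fts_smul \<i> (fts_map of_real (fts_map Im w)))"
  by (cases w rule: fts_cases; hypsubst_thin;
      simp only: fts_map.simps jor_map.simps oct_map.simps fts_add.simps fts_smul.simps jor_add.simps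
        jor_smul_def oct_add.simps prod.inject jor.inject oct.inject;
      (intro conjI)?; rule complex_eq)

lemma cext_eq:
  fixes g :: "real fts \<Rightarrow> real fts" and h :: "complex fts \<Rightarrow> complex fts"
  assumes "\<And>u v. h (fts_add u v) = fts_add (h u) (h v)"
    and "\<And>c u. h (fts_smul c u) = fts_smul c (h u)"
    and "\<And>v. h (fts_map of_real v) = fts_map of_real (g v)"
  shows "cext g w = h w"
  by (subst fts_Re_Im_decompose[of w]) (simp add: assms cext_def)

lemma cext_fts_sl2:
  "cext (fts_sl2 p q r s) w = fts_sl2 (complex_of_real p) (of_real q) (of_real r) (of_real s) w"
  by (rule cext_eq) (simp_all add: fts_sl2_add fts_sl2_smul fts_sl2_of_real)

lemma jC_Jor:
  "jC (Jor a b c (Oct x0 x1 x2 x3 x4 x5 x6 x7) (Oct y0 y1 y2 y3 y4 y5 y6 y7) (Oct z0 z1 z2 z3 z4 z5 z6 z7)) =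
   Jor (of_real a) (of_real b) (of_real c)
     (Oct (of_real x0) (of_real x1) (of_real x2) (of_real x3) (of_real x4) (of_real x5) (of_real x6) (of_real x7))
     (Oct (of_real y0) (of_real y1) (of_real y2) (of_real y3) (of_real y4) (of_real y5) (of_real y6) (of_real y7))
     (Oct (of_real z0) (of_real z1) (of_real z2) (of_real z3) (of_real z4) (of_real z5) (of_real z6) (of_real z7))"
  by (simp add: jC_def)

lemmas jC_coord_simps = jor_coord_simps jC_Jor of_real_add of_real_mult of_real_diff of_real_minus
  of_real_power of_real_1 of_real_0 of_real_numeral of_real_divide

lemma jdet_jC: "jdet (jC Y) = complex_of_real (jdet Y)"
  by (cases Y rule: jor_cases; hypsubst_thin; simp only: jC_coord_simps)

lemma jtr_jC: "jtr (jC Y) = complex_of_real (jtr Y)"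
  by (cases Y rule: jor_cases; hypsubst_thin; simp only: jC_coord_simps)

lemma jsharp_jC: "jsharp (jC Y) = jC (jsharp Y)"
  by (cases Y rule: jor_cases; hypsubst_thin; simp only: jC_coord_simps; (intro conjI)?;
      (rule TrueI | rule refl | algebra))

lemma jC_smul: "jC (jor_smul t Y) = jor_smul (complex_of_real t) (jC Y)"
  by (cases Y rule: jor_cases; hypsubst_thin; simp only: jC_coord_simps; simp)

lemma jC_jone: "jC jone = jone"
  by (simp add: jC_def jone_def oct_scalar_def)

lemma jinv_jC: "jinv (jC Y) = jC (jinv Y)"
  by (simp add: jinv_def jdet_jC jsharp_jC jC_smul)

lemma R3plus_jdet_nonzero: "Y \<in> R3plus \<Longrightarrow> jdet Y \<noteq> 0"
  by (auto simp: R3plus_def jdet_jprod_self)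

text \<open>If \<open>Y = S\<^sup>2\<close>, then \<open>(c Y)\<inverse> = R\<^sup>2\<close> for \<open>R = S\<^sup># / (\<surd>c det S)\<close>; the square root is avoided by
  taking \<open>c = M\<^sup>2\<close>.\<close>

lemma jinv_smul_R3plus:
  assumes Y: "Y \<in> R3plus" and M: "M \<noteq> 0"
  shows "jinv (jor_smul (M ^ 2) Y) \<in> R3plus"
proof -
  obtain S where S: "Y = jprod S S" "jdet S \<noteq> 0" using Y by (auto simp: R3plus_def)
  define R where "R = jor_smul (1 / (M * jdet S)) (jsharp S)"
  have "(1 / (M * jdet S)) ^ 2 = 1 / ((M ^ 2) ^ 3 * jdet S ^ 2) * (M ^ 2) ^ 2"
    using M S by (simp add: field_simps power2_eq_square power3_eq_cube)
  then have "jprod R R = jinv (jor_smul (M ^ 2) Y)"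
    by (simp add: R_def jprod_self_smul S jsharp_jprod_self jinv_def jdet_smul jsharp_smul
        jor_smul_smul jdet_jprod_self)
  moreover have "jdet R \<noteq> 0" using M S by (simp add: R_def jdet_smul jdet_sharp)
  ultimately show ?thesis unfolding R3plus_def by (intro CollectI exI[of _ R]) simp
qed

lemma tubeI: "Y \<in> R3plus \<Longrightarrow> jor_add (jC X) (jor_smul \<i> (jC Y)) \<in> tube"
  by (auto simp: tube_def)

lemma cusp_form_inversion:
  fixes Y :: "real jor" and b c :: int and N :: nat
  assumes cusp: "is_cusp_form k F a" and Y: "Y \<in> R3plus" and N: "N > 0"
    and bc: "[b * c = -1] (mod int N)"
  shows "F (jor_add (jC (jor_smul (of_int b / real N) jone)) (jor_smul \<i> (jC (jinv (jor_smul (real N ^ 2) Y))))) =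
     (\<i> * of_nat N ^ 3 * complex_of_real (jdet Y)) ^ k *
     F (jor_add (jC (jor_smul (of_int c / real N) jone)) (jor_smul \<i> (jC Y)))"
proof -
  define U where "U = jor_add (jC (jor_smul (of_int c / real N) jone)) (jor_smul \<i> (jC Y))"
  define W where "W = jor_add (jC (jor_smul (of_int b / real N) jone))
    (jor_smul \<i> (jC (jinv (jor_smul (real N ^ 2) Y))))"
  define n :: complex where "n = of_nat N"
  have n: "n \<noteq> 0" using N by (simp add: n_def)
  obtain m where m: "b * c + 1 = int N * m" using bc by (auto simp: cong_iff_dvd_diff elim: dvdE)
  then have det: "b * (- c) - (- m) * int N = 1" by (simp add: algebra_simps)
  then have det_C: "of_int b * of_int (- c) - of_int (- m) * n = (1 :: complex)"
    unfolding n_def by (metis of_int_1 of_int_diff of_int_mult of_int_of_nat_eq)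
  have gZ: "fts_sl2 (of_int b) (of_int (- m)) (of_int (int N)) (of_int (- c)) \<in> GZ"
    using fts_sl2_GZ[OF _ det] N by simp
  have V: "jor_smul \<i> (jC Y) = jor_add U (jor_smul (of_int (- c) / n) jone)"
    unfolding U_def n_def by (simp add: jC_smul jC_jone jor_add_smul_jone_cancel)
  have dV: "jdet (jor_smul \<i> (jC Y)) = - \<i> * complex_of_real (jdet Y)"
    by (simp add: jdet_smul jdet_jC power3_eq_cube)
  have dY: "jdet Y \<noteq> 0" using Y by (rule R3plus_jdet_nonzero)
  have point: "jor_add (jor_smul (-1) (jinv (jor_smul (n ^ 2) (jor_smul \<i> (jC Y))))) (jor_smul (of_int b / n) jone) = W"
  proof -
    have "- (1 / (n ^ 2 * \<i>)) = \<i> * complex_of_real (1 / real N ^ 2)"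
      using n by (simp add: n_def field_simps)
    then show ?thesis using N n unfolding W_def
      by (simp add: jor_smul_smul jinv_smul jinv_jC jC_smul jC_jone jor_add_commute n_def)
  qed
  have factor: "- (n ^ 3 * jdet (jor_smul \<i> (jC Y))) = \<i> * of_nat N ^ 3 * complex_of_real (jdet Y)"
    by (simp add: dV n_def)
  have "cext (fts_sl2 (of_int b) (of_int (- m)) (of_int (int N)) (of_int (- c))) (femb U) =
      fts_sl2 (of_int b) (of_int (- m)) n (of_int (- c)) (fts_embed U)"
    by (simp add: cext_fts_sl2 femb_eq_fts_embed n_def)
  also have "\<dots> = fts_smul (\<i> * of_nat N ^ 3 * complex_of_real (jdet Y)) (femb W)"
    using fts_sl2_embed[OF n det_C V] dV dY point factor by (simp add: femb_eq_fts_embed mult_ac)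
  finally have "cext (fts_sl2 (of_int b) (of_int (- m)) (of_int (int N)) (of_int (- c))) (femb U) =
    fts_smul (\<i> * of_nat N ^ 3 * complex_of_real (jdet Y)) (femb W)" .
  moreover have "U \<in> tube" "W \<in> tube"
    unfolding U_def W_def using Y N by (auto intro!: tubeI jinv_smul_R3plus)
  ultimately show ?thesis
    using cusp gZ unfolding is_cusp_form_def U_def[symmetric] W_def[symmetric] by blast
qed

section \<open>Characters and Gauss sums\<close>

lemma ee_add: "ee (x + y) = ee x * ee y"
  by (simp add: ee_def distrib_left exp_add)

lemma ee_of_int: "ee (of_int n) = 1"
  unfolding ee_def exp_eq_1 by (intro conjI exI[of _ n]) simp_all

definition ee_frac :: "nat \<Rightarrow> int \<Rightarrow> complex" where
  "ee_frac N m = ee (of_int m / of_nat N)"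

lemma ee_frac_add: "ee_frac N (m + m') = ee_frac N m * ee_frac N m'"
  by (simp add: ee_frac_def add_divide_distrib ee_add)

lemma ee_frac_cong:
  assumes "[m = m'] (mod int N)" shows "ee_frac N m = ee_frac N m'"
proof (cases "N = 0")
  case False
  obtain k where k: "m' = m + int N * k" using assms by (auto simp: cong_iff_lin)
  have "of_int m' / of_nat N = (of_int m / of_nat N + of_int k :: complex)"
    using False by (simp add: k field_simps)
  then show ?thesis by (simp add: ee_frac_def ee_add ee_of_int)
qed (use assms in simp)

lemma ee_frac_mod: "ee_frac N (m mod int N) = ee_frac N m"
  by (rule ee_frac_cong) simp

lemma ee_frac_mult_int: "ee_frac N (m * int t) = ee_frac N m ^ t"
proof (induction t)
  case (Suc t)
  have "m * int (Suc t) = m * int t + m" by (simp add: algebra_simps)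
  then show ?case using Suc by (simp add: ee_frac_add)
qed (simp add: ee_frac_def ee_def)

lemma ee_frac_eq_1_imp_dvd:
  assumes "N > 0" "ee_frac N m = 1" shows "int N dvd m"
proof -
  have "exp (\<i> * complex_of_real (2 * pi * (of_int m / real N))) = 1"
    using assms(2) by (simp add: ee_frac_def ee_def mult_ac)
  then obtain n :: int where "2 * pi * (of_int m / real N) = of_int (2 * n) * pi"
    by (auto simp: exp_eq_1)
  then have "of_int m = (of_int (n * int N) :: real)"
    using assms(1) by (simp add: field_simps)
  then have "m = n * int N" by (simp only: of_int_eq_iff)
  then show ?thesis by simp
qed

lemma cnj_ee_frac: "cnj (ee_frac N m) = ee_frac N (- m)"
proof -
  have "cnj (2 * complex_of_real pi * \<i> * (of_int m / of_nat N)) =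
      2 * complex_of_real pi * \<i> * (of_int (- m) / of_nat N)"
    by simp
  then show ?thesis by (simp add: ee_frac_def ee_def exp_cnj)
qed

lemma sum_ee_frac:
  assumes N: "N > 0"
  shows "(\<Sum>t<N. ee_frac N (m * int t)) = (if int N dvd m then of_nat N else 0)"
proof (cases "int N dvd m")
  case True
  then have "ee_frac N (m * int t) = 1" for t
    using ee_frac_cong[of "m * int t" 0 N] by (simp add: cong_0_iff ee_frac_def ee_def)
  then show ?thesis using True by simp
next
  case False
  have "ee_frac N m ^ N = ee_frac N 0"
    unfolding ee_frac_mult_int[symmetric] by (rule ee_frac_cong) (simp add: cong_0_iff)
  then have "ee_frac N m ^ N = 1" by (simp add: ee_frac_def ee_def)
  moreover have "ee_frac N m \<noteq> 1" using False ee_frac_eq_1_imp_dvd[OF N] by blast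
  ultimately show ?thesis using False by (simp add: ee_frac_mult_int sum_gp_strict)
qed

lemma finite_parseval:
  fixes f :: "nat \<Rightarrow> complex"
  assumes N: "N > 0"
  defines "S t \<equiv> \<Sum>b<N. f b * ee_frac N (int b * int t)"
  shows "(\<Sum>t<N. S t * cnj (S t)) = of_nat N * (\<Sum>b<N. f b * cnj (f b))"
proof -
  have dvd_iff: "int N dvd (int b - int b') \<longleftrightarrow> b = b'" if "b < N" "b' < N" for b b'
  proof
    assume "int N dvd int b - int b'"
    then have "[int b = int b'] (mod int N)" by (simp add: cong_iff_dvd_diff)
    then show "b = b'" using that by (simp add: cong_int_iff cong_less_modulus_unique_nat)
  qed simp
  let ?e = "\<lambda>b b' t. ee_frac N ((int b - int b') * int t)"
  have "?e b b' t = ee_frac N (int b * int t) * cnj (ee_frac N (int b' * int t))" for b b' t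
    by (simp add: cnj_ee_frac algebra_simps flip: ee_frac_add)
  then have "S t * cnj (S t) = (\<Sum>b<N. \<Sum>b'<N. f b * cnj (f b') * ?e b b' t)" for t
    unfolding S_def cnj_sum sum_product by (simp add: mult_ac)
  then have "(\<Sum>t<N. S t * cnj (S t)) = (\<Sum>t<N. \<Sum>b<N. \<Sum>b'<N. f b * cnj (f b') * ?e b b' t)"
    by simp
  also have "\<dots> = (\<Sum>b<N. \<Sum>b'<N. \<Sum>t<N. f b * cnj (f b') * ?e b b' t)"
    by (subst sum.swap) (rule sum.cong[OF refl], rule sum.swap)
  also have "\<dots> = (\<Sum>b<N. \<Sum>b'<N. f b * cnj (f b') * (\<Sum>t<N. ?e b b' t))"
    by (simp only: sum_distrib_left)
  also have "\<dots> = (\<Sum>b<N. \<Sum>b'<N. if b = b' then of_nat N * (f b * cnj (f b)) else 0)"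
    by (intro sum.cong refl) (simp add: sum_ee_frac[OF N] dvd_iff)
  also have "\<dots> = of_nat N * (\<Sum>b<N. f b * cnj (f b))"
    by (simp add: sum_distrib_left)
  finally show ?thesis .
qed

lemma exists_power_cong_1:
  fixes a :: int assumes N: "N > 0" and a: "coprime a (int N)"
  shows "\<exists>n>0. [a ^ n = 1] (mod int N)"
proof -
  have "\<not> inj_on (\<lambda>i. a ^ i mod int N) {..N}"
  proof
    assume "inj_on (\<lambda>i. a ^ i mod int N) {..N}"
    moreover have "(\<lambda>i. a ^ i mod int N) ` {..N} \<subseteq> {0..<int N}" using N by auto
    ultimately have "card {..N} \<le> card {0..<int N}" by (intro card_inj_on_le) auto
    then show False by simp
  qed
  then obtain i j where ij: "i < j" "[a ^ i = a ^ j] (mod int N)"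
    unfolding inj_on_def cong_def by (metis linorder_neqE_nat)
  then have "[a ^ i * 1 = a ^ i * a ^ (j - i)] (mod int N)" by (simp flip: power_add)
  moreover have "coprime (a ^ i) (int N)" using a by simp
  ultimately have "[1 = a ^ (j - i)] (mod int N)" using cong_mult_lcancel by blast
  then show ?thesis using ij(1) by (intro exI[of _ "j - i"]) (simp add: cong_sym)
qed

context
  fixes N :: nat and chi :: "int \<Rightarrow> complex"
  assumes dchar: "dchar N chi"
begin

lemma dchar_pos: "N > 0" and dchar_1: "chi 1 = 1" and dchar_mult: "chi (a * b) = chi a * chi b"
  and dchar_eq_0_iff: "chi a = 0 \<longleftrightarrow> \<not> coprime a (int N)"
  using dchar by (simp_all add: dchar_def)

lemma dchar_cong:
  assumes "[a = b] (mod int N)" shows "chi a = chi b"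
proof -
  have "chi (a + int N * k) = chi a" for k
  proof (induction k rule: int_induct[where k = 0])
    case (step1 k)
    then show ?case using dchar by (simp add: dchar_def distrib_left flip: add.assoc)
  next
    case (step2 k)
    have "chi (a + int N * (k - 1) + int N) = chi (a + int N * (k - 1))"
      using dchar by (simp add: dchar_def)
    then show ?case using step2 by (simp add: algebra_simps)
  qed simp
  then show ?thesis using assms by (auto simp: cong_iff_lin)
qed

lemma dchar_mod: "chi (a mod int N) = chi a"
  by (rule dchar_cong) simp

lemma dchar_power: "chi (a ^ n) = chi a ^ n"
  by (induction n) (simp_all add: dchar_1 dchar_mult)

lemma dchar_norm:
  assumes "coprime a (int N)" shows "norm (chi a) = 1"
proof -
  obtain n where n: "n > 0" "[a ^ n = 1] (mod int N)" using exists_power_cong_1[OF dchar_pos assms] by blast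
  then have "chi a ^ n = 1" using dchar_cong[OF n(2)] by (simp add: dchar_power dchar_1)
  then show ?thesis using n(1) power_eq_1_iff[of "chi a" n] by simp
qed

lemma dchar_cnj_mult:
  assumes "coprime a (int N)" shows "cnj (chi a) * chi a = 1"
  using complex_norm_square[of "chi a"] dchar_norm[OF assms] by (simp add: mult.commute)

lemma dchar_minus_1_mult_self: "chi (-1) * chi (-1) = 1"
  using dchar_mult[of "-1" "-1"] dchar_1 by simp

lemma dchar_cnj: "dchar N (\<lambda>n. cnj (chi n))"
  using dchar unfolding dchar_def by (simp add: dchar_mult)

end

lemma primitive_dchar_cnj:
  assumes "primitive_dchar N chi" shows "primitive_dchar N (\<lambda>n. cnj (chi n))"
proof -
  have "cnj (chi a) = 1 \<longleftrightarrow> chi a = 1" for a by (metis complex_cnj_cnj complex_cnj_one)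
  then show ?thesis
    using assms dchar_cnj[of N chi] unfolding primitive_dchar_def by simp
qed

lemma bij_betw_mult_mod:
  fixes u :: int assumes N: "N > 0" and u: "coprime u (int N)"
  shows "bij_betw (\<lambda>b. nat ((int b * u) mod int N)) {..<N} {..<N}"
proof -
  let ?f = "\<lambda>b. nat ((int b * u) mod int N)"
  have maps: "?f ` {..<N} \<subseteq> {..<N}" using N by (auto simp: nat_less_iff)
  have "inj_on ?f {..<N}"
  proof (rule inj_onI)
    fix b b' assume b: "b \<in> {..<N}" and b': "b' \<in> {..<N}" and "?f b = ?f b'"
    then have "[int b * u = int b' * u] (mod int N)" using N by (simp add: cong_def nat_eq_iff)
    then have "[int b = int b'] (mod int N)" using cong_mult_rcancel[OF u] by blast
    then show "b = b'" using b b' by (simp add: cong_int_iff cong_less_modulus_unique_nat)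
  qed
  with maps show ?thesis by (simp add: bij_betw_def endo_inj_surj)
qed

lemma gauss_sum_ee_frac: "gauss_sum N psi = (\<Sum>m<N. psi (int m) * ee_frac N (int m))"
  by (simp add: gauss_sum_def ee_frac_def)

lemma twisted_gauss_sum_coprime:
  assumes dchar: "dchar N psi" and t: "coprime t (int N)"
  shows "(\<Sum>b<N. psi (int b) * ee_frac N (int b * t)) = cnj (psi t) * gauss_sum N psi"
proof -
  have N: "N > 0" using dchar_pos[OF dchar] .
  let ?f = "\<lambda>b. nat ((int b * t) mod int N)"
  have f: "int (?f b) = (int b * t) mod int N" for b using N by simp
  have "gauss_sum N psi = (\<Sum>b<N. psi (int (?f b)) * ee_frac N (int (?f b)))"
    unfolding gauss_sum_ee_frac by (rule sum.reindex_bij_betw[OF bij_betw_mult_mod[OF N t], symmetric])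
  also have "\<dots> = psi t * (\<Sum>b<N. psi (int b) * ee_frac N (int b * t))"
    unfolding f sum_distrib_left
    by (intro sum.cong refl) (simp add: dchar_mod[OF dchar] ee_frac_mod dchar_mult[OF dchar] mult_ac)
  finally show ?thesis using dchar_cnj_mult[OF dchar t] by (simp add: mult.assoc [symmetric])
qed

text \<open>Primitivity enters only here: if \<open>d = gcd t N > 1\<close>, there is \<open>a \<equiv> 1 (mod N/d)\<close> with
  \<open>\<psi> a \<noteq> 1\<close>, and \<open>b \<mapsto> a b\<close> permutes the terms of the sum while multiplying it by \<open>\<psi> a\<close>.\<close>

lemma twisted_gauss_sum_not_coprime:
  assumes prim: "primitive_dchar N psi" and t: "\<not> coprime t (int N)"
  shows "(\<Sum>b<N. psi (int b) * ee_frac N (int b * t)) = 0"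
proof -
  have dchar: "dchar N psi" using prim by (simp add: primitive_dchar_def)
  have N: "N > 0" using dchar_pos[OF dchar] .
  define g where "g = nat (gcd t (int N))"
  have g: "int g = gcd t (int N)" "g dvd N" "g \<noteq> 1" "g > 0"
    using N t by (auto simp: g_def coprime_iff_gcd_eq_1 simp flip: int_dvd_int_iff)
  define d where "d = N div g"
  have dg: "d * g = N" using g(2) by (simp add: d_def)
  then have "0 < d" "d dvd N" "d < N" using N g(3,4)
    by (auto intro: dvd_triv_left)
  then obtain a where a: "coprime a (int N)" "[a = 1] (mod int d)" "psi a \<noteq> 1"
    using prim unfolding primitive_dchar_def cong_def by blast
  have "int d dvd a - 1" "int g dvd t" using a(2) g(1) by (simp_all add: cong_iff_dvd_diff)
  then have Nat: "int N dvd (a - 1) * t" using dg by (metis mult_dvd_mono of_nat_mult)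
  let ?S = "\<Sum>b<N. psi (int b) * ee_frac N (int b * t)"
  let ?f = "\<lambda>b. nat ((int b * a) mod int N)"
  have f: "int (?f b) = (int b * a) mod int N" for b using N by simp
  have shift: "[(int b * a) mod int N * t = int b * t] (mod int N)" for b
  proof -
    have "[(int b * a) mod int N * t = int b * a * t] (mod int N)" by (simp add: cong_def mod_mult_left_eq)
    also have "[int b * a * t = int b * t] (mod int N)"
      using dvd_mult[OF Nat, of "int b"] by (simp add: cong_iff_dvd_diff algebra_simps)
    finally show ?thesis .
  qed
  have "?S = (\<Sum>b<N. psi (int (?f b)) * ee_frac N (int (?f b) * t))"
    by (rule sum.reindex_bij_betw[OF bij_betw_mult_mod[OF N a(1)], symmetric])
  also have "\<dots> = psi a * ?S"
    unfolding f sum_distrib_left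
    by (intro sum.cong refl) (simp add: dchar_mod[OF dchar] ee_frac_cong[OF shift] dchar_mult[OF dchar])
  finally have "(1 - psi a) * ?S = 0" by (simp add: algebra_simps)
  with a(3) show ?thesis by simp
qed

lemma twisted_gauss_sum:
  assumes "primitive_dchar N psi"
  shows "(\<Sum>b<N. psi (int b) * ee_frac N (int b * t)) = cnj (psi t) * gauss_sum N psi"
proof (cases "coprime t (int N)")
  case True
  then show ?thesis using assms twisted_gauss_sum_coprime by (simp add: primitive_dchar_def)
next
  case False
  then have "psi t = 0" using assms dchar_eq_0_iff[of N psi t] by (simp add: primitive_dchar_def)
  then show ?thesis using assms False twisted_gauss_sum_not_coprime by simp
qed

lemma gauss_sum_cnj:
  assumes prim: "primitive_dchar N psi"
  shows "gauss_sum N (\<lambda>n. cnj (psi n)) = psi (-1) * cnj (gauss_sum N psi)"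
proof -
  have "cnj (gauss_sum N psi) = (\<Sum>b<N. cnj (psi (int b)) * ee_frac N (int b * (-1)))"
    by (simp add: gauss_sum_ee_frac cnj_ee_frac)
  also have "\<dots> = psi (-1) * gauss_sum N (\<lambda>n. cnj (psi n))"
    using twisted_gauss_sum[OF primitive_dchar_cnj[OF prim], of "-1"] by simp
  finally show ?thesis using prim dchar_minus_1_mult_self
    by (simp add: primitive_dchar_def) (metis mult.assoc mult_1)
qed

lemma gauss_sum_mult_cnj:
  assumes prim: "primitive_dchar N psi"
  shows "gauss_sum N psi * cnj (gauss_sum N psi) = of_nat N"
proof -
  have dchar: "dchar N psi" using prim by (simp add: primitive_dchar_def)
  have N: "N > 0" using dchar_pos[OF dchar] .
  define W where "W = gauss_sum N psi"
  define K where "K = (\<Sum>t<N. psi (int t) * cnj (psi (int t)))"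
  have "K * (W * cnj W) = (\<Sum>t<N. (cnj (psi (int t)) * W) * cnj (cnj (psi (int t)) * W))"
    unfolding K_def sum_distrib_right by (intro sum.cong refl) (simp add: algebra_simps)
  also have "\<dots> = of_nat N * K"
    using finite_parseval[OF N, of "\<lambda>b. psi (int b)"] twisted_gauss_sum[OF prim]
    by (simp add: K_def W_def)
  finally have eq: "K * (W * cnj W) = of_nat N * K" .
  have "K = of_real (\<Sum>t<N. (norm (psi (int t)))\<^sup>2)"
    by (simp only: K_def of_real_sum complex_norm_square)
  moreover have "(\<Sum>t<N. (norm (psi (int t)))\<^sup>2) \<ge> (norm (psi (int (nat (1 mod int N)))))\<^sup>2"
    using N by (intro member_le_sum) (auto simp: nat_less_iff)
  moreover have "psi (int (nat (1 mod int N))) = 1"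
    using N dchar_cong[OF dchar, of "1 mod int N" 1] dchar_1[OF dchar] by (simp add: cong_def)
  ultimately have "K \<noteq> 0" by (auto simp del: of_real_sum)
  with eq show ?thesis by (simp add: W_def)
qed

lemma gauss_sum_nonzero:
  assumes "primitive_dchar N psi" shows "gauss_sum N psi \<noteq> 0"
  using gauss_sum_mult_cnj[OF assms] dchar_pos[of N psi] assms by (auto simp: primitive_dchar_def)

lemma bij_betw_minus_inverse_mod:
  assumes N: "N > 0"
    and cc: "\<And>b. b < N \<Longrightarrow> coprime (int b) (int N) \<Longrightarrow> [int b * cc b = -1] (mod int N)"
  defines "U \<equiv> {b. b < N \<and> coprime (int b) (int N)}"
  shows "bij_betw (\<lambda>b. nat (cc b mod int N)) U U"
proof -
  let ?sg = "\<lambda>b. nat (cc b mod int N)"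
  have sg: "int (?sg b) = cc b mod int N" for b using N by simp
  have cop: "coprime (cc b) (int N)" if "b \<in> U" for b
    using cc[of b] that cong_imp_coprime[OF cong_sym, of "int b * cc b" "-1" "int N"] by (auto simp: U_def)
  have "?sg b \<in> U" if "b \<in> U" for b
  proof -
    have "coprime (int (?sg b)) (int N)" using cop[OF that] N by (simp add: sg)
    moreover have "?sg b < N" using N by (simp add: nat_less_iff)
    ultimately show ?thesis unfolding U_def by blast
  qed
  then have "?sg ` U \<subseteq> U" by auto
  moreover have "inj_on ?sg U"
  proof (rule inj_onI)
    fix b b' assume b: "b \<in> U" and b': "b' \<in> U" and "?sg b = ?sg b'"
    then have "int (?sg b) = int (?sg b')" by (simp only:)
    then have "[cc b = cc b'] (mod int N)" by (simp only: sg cong_def)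
    then have "[int b * cc b' = int b * cc b] (mod int N)" by (rule cong_scalar_left[OF cong_sym])
    also have "[int b * cc b = -1] (mod int N)" using cc b by (auto simp: U_def)
    also have "[-1 = int b' * cc b'] (mod int N)" using cc b' by (auto simp: U_def cong_sym)
    finally have "[int b = int b'] (mod int N)" using cong_mult_rcancel[OF cop[OF b']] by blast
    then show "b = b'" using b b' by (simp add: U_def cong_int_iff cong_less_modulus_unique_nat)
  qed
  ultimately show ?thesis by (simp add: U_def bij_betw_def endo_inj_surj)
qed

lemma twisted_gauss_sum_inverse:
  assumes prim: "primitive_dchar N chi"
    and cc: "\<And>b. b < N \<Longrightarrow> coprime (int b) (int N) \<Longrightarrow> [int b * cc b = -1] (mod int N)"
  shows "(\<Sum>b<N. cnj (chi (int b)) * ee_frac N (cc b * t)) = chi (-1) * gauss_sum N chi * cnj (chi t)"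
proof -
  have dchar: "dchar N chi" using prim by (simp add: primitive_dchar_def)
  have N: "N > 0" using dchar_pos[OF dchar] .
  define U where "U = {b. b < N \<and> coprime (int b) (int N)}"
  define h where "h m = chi (int m) * ee_frac N (int m * t)" for m
  have U: "finite U" "U \<subseteq> {..<N}" by (auto simp: U_def)
  have zero: "chi (int b) = 0" if "b \<notin> U" "b < N" for b
    using that dchar_eq_0_iff[OF dchar] by (auto simp: U_def)
  have summand: "cnj (chi (int b)) * ee_frac N (cc b * t) = chi (-1) * h (nat (cc b mod int N))"
    if b: "b \<in> U" for b
  proof -
    have "chi (int b) * chi (cc b) = chi (-1)"
      using dchar_cong[OF dchar cc[of b]] b by (simp add: U_def dchar_mult[OF dchar])
    then have "cnj (chi (int b)) = chi (-1) * chi (cc b)"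
      using dchar_cnj_mult[OF dchar, of "int b"] dchar_minus_1_mult_self[OF dchar] b
      by (simp add: U_def) (metis mult.assoc mult.commute mult_1)
    moreover have "ee_frac N ((cc b mod int N) * t) = ee_frac N (cc b * t)"
      by (rule ee_frac_cong) (simp add: cong_def mod_mult_left_eq)
    ultimately show ?thesis using N by (simp add: h_def dchar_mod[OF dchar])
  qed
  have "(\<Sum>b<N. cnj (chi (int b)) * ee_frac N (cc b * t)) = (\<Sum>b\<in>U. chi (-1) * h (nat (cc b mod int N)))"
    using U zero summand by (intro sum.mono_neutral_cong_right) auto
  also have "\<dots> = chi (-1) * (\<Sum>b\<in>U. h (nat (cc b mod int N)))"
    by (simp add: sum_distrib_left)
  also have "(\<Sum>b\<in>U. h (nat (cc b mod int N))) = (\<Sum>m\<in>U. h m)"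
    using bij_betw_minus_inverse_mod[OF N cc] unfolding U_def by (rule sum.reindex_bij_betw)
  also have "(\<Sum>m\<in>U. h m) = (\<Sum>m<N. h m)"
    using U zero by (intro sum.mono_neutral_left) (auto simp: h_def)
  also have "\<dots> = cnj (chi t) * gauss_sum N chi"
    unfolding h_def by (rule twisted_gauss_sum[OF prim])
  finally show ?thesis by (simp add: algebra_simps)
qed

section \<open>Twisted Fourier series\<close>

lemma has_sum_sum:
  fixes f :: "'i \<Rightarrow> 'a \<Rightarrow> 'b::topological_comm_monoid_add"
  assumes "finite I" "\<And>i. i \<in> I \<Longrightarrow> (f i has_sum s i) A"
  shows "((\<lambda>x. \<Sum>i\<in>I. f i x) has_sum (\<Sum>i\<in>I. s i)) A"
  using assms
proof (induction I rule: finite_induct)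
  case (insert i I)
  then have "((\<lambda>x. f i x + (\<Sum>i\<in>I. f i x)) has_sum (s i + (\<Sum>i\<in>I. s i))) A"
    by (intro has_sum_add) auto
  with insert(1,2) show ?case by simp
qed simp

definition has_fourier_expansion :: "(complex jor \<Rightarrow> complex) \<Rightarrow> (real jor \<Rightarrow> complex) \<Rightarrow> bool" where
  "has_fourier_expansion F a \<longleftrightarrow>
     (\<forall>Z\<in>tube. ((\<lambda>T. a T * ee (jinner (jC T) Z)) has_sum F Z) JZpos)"

lemma cusp_form_has_fourier_expansion:
  assumes "is_cusp_form k F a" shows "has_fourier_expansion F a"
  unfolding has_fourier_expansion_def
proof
  fix Z assume "Z \<in> tube"
  then have "(\<lambda>T. a T * ee (jinner (jC T) Z)) summable_on JZpos"
    and "F Z = (\<Sum>\<^sub>\<infinity>T\<in>JZpos. a T * ee (jinner (jC T) Z))"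
    using assms by (auto simp: is_cusp_form_def)
  then show "((\<lambda>T. a T * ee (jinner (jC T) Z)) has_sum F Z) JZpos" by simp
qed

lemma ee_jinner_shift:
  "ee (jinner (jC T) (jor_add (jC (jor_smul s jone)) Z)) =
   ee (complex_of_real (s * jtr T)) * ee (jinner (jC T) Z)"
  by (simp add: jC_smul jC_jone jinner_add_smul_jone jtr_jC ee_add)

lemma has_sum_translates:
  assumes F: "has_fourier_expansion F a" and Y: "Y \<in> R3plus" and I: "finite I"
  shows "((\<lambda>T. (\<Sum>i\<in>I. w i * ee (of_real (s i * jtr T))) * a T * ee (jinner (jC T) (jor_smul \<i> (jC Y))))
    has_sum (\<Sum>i\<in>I. w i * F (jor_add (jC (jor_smul (s i) jone)) (jor_smul \<i> (jC Y))))) JZpos"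
proof -
  have "((\<lambda>T. w i * (a T * ee (jinner (jC T) (jor_add (jC (jor_smul (s i) jone)) (jor_smul \<i> (jC Y))))))
      has_sum w i * F (jor_add (jC (jor_smul (s i) jone)) (jor_smul \<i> (jC Y)))) JZpos" for i
    using F tubeI[OF Y] unfolding has_fourier_expansion_def by (intro has_sum_cmult_right) blast
  then have "((\<lambda>T. \<Sum>i\<in>I. w i * (a T * ee (jinner (jC T) (jor_add (jC (jor_smul (s i) jone)) (jor_smul \<i> (jC Y))))))
      has_sum (\<Sum>i\<in>I. w i * F (jor_add (jC (jor_smul (s i) jone)) (jor_smul \<i> (jC Y))))) JZpos"
    by (intro has_sum_sum[OF I])
  then show ?thesis
    by (simp add: ee_jinner_shift sum_distrib_left sum_distrib_right mult_ac)
qed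

lemma ee_trace_frac:
  assumes "T \<in> JZpos"
  shows "ee (complex_of_real (of_int b / real N * jtr T)) = ee_frac N (b * \<lfloor>jtr T\<rfloor>)"
proof -
  obtain t where "jtr T = of_int t" using assms jtr_JZ by (auto simp: JZpos_def elim: Ints_cases)
  then show ?thesis by (simp add: ee_frac_def)
qed

lemma twist_as_translates:
  assumes prim: "primitive_dchar N chi" and F: "has_fourier_expansion F a" and Y: "Y \<in> R3plus"
  shows "gauss_sum N (\<lambda>n. cnj (chi n)) * twist chi a (jor_smul \<i> (jC Y)) =
    (\<Sum>b<N. cnj (chi (int b)) * F (jor_add (jC (jor_smul (of_int (int b) / real N) jone)) (jor_smul \<i> (jC Y))))"
    (is "?W * _ = ?S")
proof -
  have "?W \<noteq> 0" by (rule gauss_sum_nonzero[OF primitive_dchar_cnj[OF prim]])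
  moreover have "((\<lambda>T. ?W * (chi \<lfloor>jtr T\<rfloor> * a T * ee (jinner (jC T) (jor_smul \<i> (jC Y))))) has_sum ?S) JZpos"
    using has_sum_translates[OF F Y finite_lessThan, where w = "\<lambda>b. cnj (chi (int b))" and s = "\<lambda>b. of_int (int b) / real N"]
  proof (rule has_sum_cong[THEN iffD1, rotated])
    fix T assume "T \<in> JZpos"
    then have "(\<Sum>b<N. cnj (chi (int b)) * ee (of_real (of_int (int b) / real N * jtr T))) =
        (\<Sum>b<N. cnj (chi (int b)) * ee_frac N (int b * \<lfloor>jtr T\<rfloor>))"
      by (simp only: ee_trace_frac)
    also have "\<dots> = chi \<lfloor>jtr T\<rfloor> * ?W"
      using twisted_gauss_sum[OF primitive_dchar_cnj[OF prim]] by simp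
    finally show "(\<Sum>b<N. cnj (chi (int b)) * ee (of_real (of_int (int b) / real N * jtr T))) * a T *
        ee (jinner (jC T) (jor_smul \<i> (jC Y))) = ?W * (chi \<lfloor>jtr T\<rfloor> * a T * ee (jinner (jC T) (jor_smul \<i> (jC Y))))"
      by (simp add: mult_ac)
  qed
  ultimately show ?thesis
    unfolding twist_def by (simp add: has_sum_cmult_right_iff infsumI)
qed

lemma translates_as_twist:
  assumes prim: "primitive_dchar N chi" and F: "has_fourier_expansion F a" and Y: "Y \<in> R3plus"
    and cc: "\<And>b. b < N \<Longrightarrow> coprime (int b) (int N) \<Longrightarrow> [int b * cc b = -1] (mod int N)"
  shows "(\<Sum>b<N. cnj (chi (int b)) * F (jor_add (jC (jor_smul (of_int (cc b) / real N) jone)) (jor_smul \<i> (jC Y)))) =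
    chi (-1) * gauss_sum N chi * twist (\<lambda>n. cnj (chi n)) a (jor_smul \<i> (jC Y))"
    (is "?S = ?c * _")
proof -
  have "?c \<noteq> 0"
    using gauss_sum_nonzero[OF prim] dchar_minus_1_mult_self[of N chi] prim
    by (auto simp: primitive_dchar_def)
  moreover have "((\<lambda>T. ?c * (cnj (chi \<lfloor>jtr T\<rfloor>) * a T * ee (jinner (jC T) (jor_smul \<i> (jC Y))))) has_sum ?S) JZpos"
    using has_sum_translates[OF F Y finite_lessThan, where w = "\<lambda>b. cnj (chi (int b))" and s = "\<lambda>b. of_int (cc b) / real N"]
  proof (rule has_sum_cong[THEN iffD1, rotated])
    fix T assume "T \<in> JZpos"
    then have "(\<Sum>b<N. cnj (chi (int b)) * ee (of_real (of_int (cc b) / real N * jtr T))) =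
        (\<Sum>b<N. cnj (chi (int b)) * ee_frac N (cc b * \<lfloor>jtr T\<rfloor>))"
      by (simp only: ee_trace_frac)
    also have "\<dots> = ?c * cnj (chi \<lfloor>jtr T\<rfloor>)"
      by (rule twisted_gauss_sum_inverse[OF prim cc])
    finally show "(\<Sum>b<N. cnj (chi (int b)) * ee (of_real (of_int (cc b) / real N * jtr T))) * a T *
        ee (jinner (jC T) (jor_smul \<i> (jC Y))) = ?c * (cnj (chi \<lfloor>jtr T\<rfloor>) * a T * ee (jinner (jC T) (jor_smul \<i> (jC Y))))"
      by (simp add: mult_ac)
  qed
  ultimately show ?thesis
    unfolding twist_def by (simp add: has_sum_cmult_right_iff infsumI)
qed

lemma sum_translates_inversion:
  assumes cusp: "is_cusp_form k F a" and Y: "Y \<in> R3plus" and dchar: "dchar N chi"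
    and cc: "\<And>b. coprime (int b) (int N) \<Longrightarrow> [int b * cc b = -1] (mod int N)"
  shows "(\<Sum>b<N. cnj (chi (int b)) * F (jor_add (jC (jor_smul (of_int (int b) / real N) jone))
            (jor_smul \<i> (jC (jinv (jor_smul (real N ^ 2) Y)))))) =
    (\<i> * of_nat N ^ 3 * complex_of_real (jdet Y)) ^ k *
    (\<Sum>b<N. cnj (chi (int b)) * F (jor_add (jC (jor_smul (of_int (cc b) / real N) jone)) (jor_smul \<i> (jC Y))))"
  unfolding sum_distrib_left
proof (rule sum.cong[OF refl])
  fix b
  show "cnj (chi (int b)) * F (jor_add (jC (jor_smul (of_int (int b) / real N) jone))
            (jor_smul \<i> (jC (jinv (jor_smul (real N ^ 2) Y))))) =
    (\<i> * of_nat N ^ 3 * complex_of_real (jdet Y)) ^ k *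
    (cnj (chi (int b)) * F (jor_add (jC (jor_smul (of_int (cc b) / real N) jone)) (jor_smul \<i> (jC Y))))"
  proof (cases "coprime (int b) (int N)")
    case True
    show ?thesis unfolding cusp_form_inversion[OF cusp Y dchar_pos[OF dchar] cc[OF True]] by simp
  next
    case False
    then show ?thesis by (simp add: dchar_eq_0_iff[OF dchar])
  qed
qed

lemma power_automorphy_factor:
  assumes "even k"
  shows "(\<i> * n ^ 3 * d) ^ k = (-1) ^ (3 * k div 2) * n ^ (3 * k) * (d :: complex) ^ k"
proof -
  obtain m where k: "k = 2 * m" using assms by (auto elim: evenE)
  have "\<i> ^ k = (-1) ^ (3 * k div 2)"
    by (simp add: k power_mult)
  then show ?thesis by (simp add: power_mult_distrib flip: power_mult)
qed

lemma gauss_sum_quotient: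
  assumes "primitive_dchar N chi"
  shows "chi (-1) * gauss_sum N chi / gauss_sum N (\<lambda>n. cnj (chi n)) = gauss_sum N chi ^ 2 / of_nat N"
proof -
  have "chi (-1) * chi (-1) = 1"
    using assms dchar_minus_1_mult_self by (auto simp: primitive_dchar_def)
  moreover have "gauss_sum N chi \<noteq> 0" by (rule gauss_sum_nonzero[OF assms])
  ultimately show ?thesis
    unfolding gauss_sum_cnj[OF assms] gauss_sum_mult_cnj[OF assms, symmetric]
    by (auto simp: field_simps power2_eq_square)
qed

lemma functional_equation_constant:
  assumes "even k" and "primitive_dchar N chi"
  shows "(\<i> * of_nat N ^ 3 * complex_of_real d) ^ k *
      (chi (-1) * gauss_sum N chi / gauss_sum N (\<lambda>n. cnj (chi n))) =
    (-1) ^ (3 * k div 2) * gauss_sum N chi ^ 2 * of_nat N powi (3 * int k - 1) * complex_of_real d ^ k"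
proof -
  have "N > 0" using assms(2) dchar_pos by (auto simp: primitive_dchar_def)
  then have "of_nat N powi (3 * int k - 1) = (of_nat N :: complex) ^ (3 * k) / of_nat N"
    by (simp add: power_int_diff flip: power_int_of_nat)
  with \<open>N > 0\<close> show ?thesis
    unfolding gauss_sum_quotient[OF assms(2)] power_automorphy_factor[OF assms(1)]
    by (simp add: field_simps)
qed

lemma exists_minus_inverse_mod:
  "\<exists>cc. \<forall>b. coprime (int b) (int N) \<longrightarrow> [int b * cc b = -1] (mod int N)"
proof -
  have "\<exists>u. [int b * u = -1] (mod int N)" if "coprime (int b) (int N)" for b
    using cong_solve_coprime_int[OF that] by (metis cong_minus_minus_iff mult_minus_right)
  then show ?thesis by metis
qed

theorem theorem2p1:
  fixes F :: "complex jor \<Rightarrow> complex" and a :: "real jor \<Rightarrow> complex"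
    and k N :: nat and chi :: "int \<Rightarrow> complex"
  assumes "is_cusp_form k F a" and "even k" and "primitive_dchar N chi"
  shows "\<forall>Y\<in>R3plus.
    twist chi a (jor_smul \<i> (jC (jinv (jor_smul (real N ^ 2) Y)))) =
      (-1) ^ (3 * k div 2) * gauss_sum N chi ^ 2 * of_nat N powi (3 * int k - 1)
      * complex_of_real (jdet Y) ^ k * twist (\<lambda>n. cnj (chi n)) a (jor_smul \<i> (jC Y))"
proof
  fix Y assume Y: "Y \<in> R3plus"
  have dchar: "dchar N chi" using assms(3) by (simp add: primitive_dchar_def)
  have F: "has_fourier_expansion F a" using assms(1) by (rule cusp_form_has_fourier_expansion)
  obtain cc where cc: "\<And>b. coprime (int b) (int N) \<Longrightarrow> [int b * cc b = -1] (mod int N)"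
    using exists_minus_inverse_mod by blast
  let ?Y' = "jinv (jor_smul (real N ^ 2) Y)" and ?W' = "gauss_sum N (\<lambda>n. cnj (chi n))"
  have "?W' * twist chi a (jor_smul \<i> (jC ?Y')) =
      (\<Sum>b<N. cnj (chi (int b)) * F (jor_add (jC (jor_smul (of_int (int b) / real N) jone)) (jor_smul \<i> (jC ?Y'))))"
    using twist_as_translates[OF assms(3) F jinv_smul_R3plus[OF Y]] dchar_pos[OF dchar] by simp
  also have "\<dots> = (\<i> * of_nat N ^ 3 * complex_of_real (jdet Y)) ^ k *
      (\<Sum>b<N. cnj (chi (int b)) * F (jor_add (jC (jor_smul (of_int (cc b) / real N) jone)) (jor_smul \<i> (jC Y))))"
    by (rule sum_translates_inversion[OF assms(1) Y dchar cc])
  also have "\<dots> = (\<i> * of_nat N ^ 3 * complex_of_real (jdet Y)) ^ k *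
      (chi (-1) * gauss_sum N chi * twist (\<lambda>n. cnj (chi n)) a (jor_smul \<i> (jC Y)))"
    using translates_as_twist[OF assms(3) F Y] cc by simp
  finally have "twist chi a (jor_smul \<i> (jC ?Y')) =
      (\<i> * of_nat N ^ 3 * complex_of_real (jdet Y)) ^ k * (chi (-1) * gauss_sum N chi / ?W') *
      twist (\<lambda>n. cnj (chi n)) a (jor_smul \<i> (jC Y))"
    using gauss_sum_nonzero[OF primitive_dchar_cnj[OF assms(3)]] by (simp add: field_simps)
  then show "twist chi a (jor_smul \<i> (jC ?Y')) =
      (-1) ^ (3 * k div 2) * gauss_sum N chi ^ 2 * of_nat N powi (3 * int k - 1)
      * complex_of_real (jdet Y) ^ k * twist (\<lambda>n. cnj (chi n)) a (jor_smul \<i> (jC Y))"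
    by (simp only: functional_equation_constant[OF assms(2,3)])
qed

end
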